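(* Every pre-Hilbert $*$-category is additive, i.e. it has finite biproducts and its unique enrichment in commutative monoids (coming from the biproducts) is an enrichment in abelian groups.
   Context: A $*$-category is a category equipped with a choice of morphism $f^*\colon Y\to X$ for each morphism $f\colon X\to Y$ such that $1^*=1$, $(gf)^*=f^*g^*$ and $(f^* )^*=f$. A morphism $f$ is an isometry (isometric) if $f^*f=1$. A kernel of $f\colon X\to Y$ is an equaliser of $f$ and the zero morphism; an isometric kernel is a kernel that is an isometry. An orthonormal biproduct of $X_1,X_2$ is a biproduct $(X,s_1,r_1,s_2,r_2)$ (so $(X,s_1,s_2)$ a coproduct, $(X,r_1,r_2)$ a product, $r_ks_k=1$, $r_ks_j=0$ for $j\neq k$) with $r_k=s_k^*$ for each $k$. A pre-Hilbert $*$-category is a $*$-category in which (R1) there is a zero object, (R2) every pair of objects has an orthonormal biproduct, (R3) every morphism has an isometric kernel, and (R4) for every object $X$ the diagonal $\Delta=\begin{bmatrix}1\\1\end{bmatrix}\colon X\to X\oplus X$ (into a chosen orthonormal biproduct) is a normal monomorphism, i.e. a kernel of some morphism. A category with finite biproducts has a unique enrichment in commutative monoids, with $f+g=\nabla(f\oplus g)\Delta$. *)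

theory Defs
  imports "HOL-Algebra.Group"
begin

text \<open>A category presented by its objects, arrows, source, target, identities and
  composition (Cmp C g f is g after f), together with an involution Str (the star).\<close>

record ('o, 'm) starcat =
  Ob  :: "'o set"
  Ar  :: "'m set"
  Src :: "'m \<Rightarrow> 'o"
  Tgt :: "'m \<Rightarrow> 'o"
  Idm :: "'o \<Rightarrow> 'm"
  Cmp :: "'m \<Rightarrow> 'm \<Rightarrow> 'm"
  Str :: "'m \<Rightarrow> 'm"

definition hom :: "('o, 'm) starcat \<Rightarrow> 'o \<Rightarrow> 'o \<Rightarrow> 'm set" where
  "hom C X Y = {f \<in> Ar C. Src C f = X \<and> Tgt C f = Y}"

definition is_category :: "('o, 'm) starcat \<Rightarrow> bool" where
  "is_category C \<longleftrightarrow>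
     (\<forall>f \<in> Ar C. Src C f \<in> Ob C \<and> Tgt C f \<in> Ob C)
   \<and> (\<forall>X \<in> Ob C. Idm C X \<in> hom C X X)
   \<and> (\<forall>f \<in> Ar C. \<forall>g \<in> Ar C. Tgt C f = Src C g \<longrightarrow>
        Cmp C g f \<in> hom C (Src C f) (Tgt C g))
   \<and> (\<forall>f \<in> Ar C. \<forall>g \<in> Ar C. \<forall>h \<in> Ar C. Tgt C f = Src C g \<longrightarrow> Tgt C g = Src C h \<longrightarrow>
        Cmp C h (Cmp C g f) = Cmp C (Cmp C h g) f)
   \<and> (\<forall>f \<in> Ar C. Cmp C (Idm C (Tgt C f)) f = f \<and> Cmp C f (Idm C (Src C f)) = f)"

definition is_star_category :: "('o, 'm) starcat \<Rightarrow> bool" where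
  "is_star_category C \<longleftrightarrow> is_category C
   \<and> (\<forall>f \<in> Ar C. Str C f \<in> hom C (Tgt C f) (Src C f))
   \<and> (\<forall>X \<in> Ob C. Str C (Idm C X) = Idm C X)
   \<and> (\<forall>f \<in> Ar C. \<forall>g \<in> Ar C. Tgt C f = Src C g \<longrightarrow>
        Str C (Cmp C g f) = Cmp C (Str C f) (Str C g))
   \<and> (\<forall>f \<in> Ar C. Str C (Str C f) = f)"

definition is_zero_obj :: "('o, 'm) starcat \<Rightarrow> 'o \<Rightarrow> bool" where
  "is_zero_obj C Z \<longleftrightarrow> Z \<in> Ob C \<and>
     (\<forall>Y \<in> Ob C. (\<exists>!f. f \<in> hom C Z Y) \<and> (\<exists>!f. f \<in> hom C Y Z))"

definition zero_mor :: "('o, 'm) starcat \<Rightarrow> 'o \<Rightarrow> 'o \<Rightarrow> 'm" where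
  "zero_mor C X Y = (SOME z. \<exists>Z. is_zero_obj C Z \<and>
       z = Cmp C (THE b. b \<in> hom C Z Y) (THE a. a \<in> hom C X Z))"

definition is_equaliser :: "('o, 'm) starcat \<Rightarrow> 'm \<Rightarrow> 'm \<Rightarrow> 'm \<Rightarrow> bool" where
  "is_equaliser C f g e \<longleftrightarrow> e \<in> Ar C \<and> Tgt C e = Src C f \<and>
     Cmp C f e = Cmp C g e \<and>
     (\<forall>h \<in> Ar C. Tgt C h = Src C f \<longrightarrow> Cmp C f h = Cmp C g h \<longrightarrow>
        (\<exists>!u. u \<in> hom C (Src C h) (Src C e) \<and> Cmp C e u = h))"

definition is_kernel :: "('o, 'm) starcat \<Rightarrow> 'm \<Rightarrow> 'm \<Rightarrow> bool" where
  "is_kernel C f e \<longleftrightarrow> is_equaliser C f (zero_mor C (Src C f) (Tgt C f)) e"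

definition is_isometry :: "('o, 'm) starcat \<Rightarrow> 'm \<Rightarrow> bool" where
  "is_isometry C f \<longleftrightarrow> f \<in> Ar C \<and> Cmp C (Str C f) f = Idm C (Src C f)"

definition is_normal_mono :: "('o, 'm) starcat \<Rightarrow> 'm \<Rightarrow> bool" where
  "is_normal_mono C e \<longleftrightarrow> (\<exists>g \<in> Ar C. Src C g = Tgt C e \<and> is_kernel C g e)"

definition is_biproduct :: "('o, 'm) starcat \<Rightarrow> 'o \<Rightarrow> 'o \<Rightarrow> 'o \<times> 'm \<times> 'm \<times> 'm \<times> 'm \<Rightarrow> bool" where
  "is_biproduct C X1 X2 b \<longleftrightarrow> (case b of (X, s1, r1, s2, r2) \<Rightarrow>
     X \<in> Ob C \<and> s1 \<in> hom C X1 X \<and> s2 \<in> hom C X2 X \<and> r1 \<in> hom C X X1 \<and> r2 \<in> hom C X X2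
   \<and> (\<forall>W \<in> Ob C. \<forall>a1 \<in> hom C X1 W. \<forall>a2 \<in> hom C X2 W.
        \<exists>!u. u \<in> hom C X W \<and> Cmp C u s1 = a1 \<and> Cmp C u s2 = a2)
   \<and> (\<forall>W \<in> Ob C. \<forall>a1 \<in> hom C W X1. \<forall>a2 \<in> hom C W X2.
        \<exists>!u. u \<in> hom C W X \<and> Cmp C r1 u = a1 \<and> Cmp C r2 u = a2)
   \<and> Cmp C r1 s1 = Idm C X1 \<and> Cmp C r2 s2 = Idm C X2
   \<and> Cmp C r1 s2 = zero_mor C X2 X1 \<and> Cmp C r2 s1 = zero_mor C X1 X2)"

definition is_orthonormal_biproduct ::
  "('o, 'm) starcat \<Rightarrow> 'o \<Rightarrow> 'o \<Rightarrow> 'o \<times> 'm \<times> 'm \<times> 'm \<times> 'm \<Rightarrow> bool" where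
  "is_orthonormal_biproduct C X1 X2 b \<longleftrightarrow> is_biproduct C X1 X2 b \<and>
     (case b of (X, s1, r1, s2, r2) \<Rightarrow> r1 = Str C s1 \<and> r2 = Str C s2)"

definition diag :: "('o, 'm) starcat \<Rightarrow> 'o \<Rightarrow> 'o \<times> 'm \<times> 'm \<times> 'm \<times> 'm \<Rightarrow> 'm" where
  "diag C X b = (case b of (B, s1, r1, s2, r2) \<Rightarrow>
     THE u. u \<in> hom C X B \<and> Cmp C r1 u = Idm C X \<and> Cmp C r2 u = Idm C X)"

definition codiag :: "('o, 'm) starcat \<Rightarrow> 'o \<Rightarrow> 'o \<times> 'm \<times> 'm \<times> 'm \<times> 'm \<Rightarrow> 'm" where
  "codiag C X b = (case b of (B, s1, r1, s2, r2) \<Rightarrow>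
     THE u. u \<in> hom C B X \<and> Cmp C u s1 = Idm C X \<and> Cmp C u s2 = Idm C X)"

definition dsum :: "('o, 'm) starcat \<Rightarrow> 'o \<times> 'm \<times> 'm \<times> 'm \<times> 'm \<Rightarrow> 'o \<times> 'm \<times> 'm \<times> 'm \<times> 'm
    \<Rightarrow> 'm \<Rightarrow> 'm \<Rightarrow> 'm" where
  "dsum C b c f g = (case b of (B, s1, r1, s2, r2) \<Rightarrow> case c of (B', t1, q1, t2, q2) \<Rightarrow>
     THE v. v \<in> hom C B B' \<and> Cmp C q1 v = Cmp C f r1 \<and> Cmp C q2 v = Cmp C g r2)"

text \<open>The addition coming from biproducts: f + g = \<nabla> (f \<oplus> g) \<Delta>, using some chosen
  biproducts X \<oplus> X and Y \<oplus> Y (the result does not depend on the choice).\<close>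
definition mplus :: "('o, 'm) starcat \<Rightarrow> 'm \<Rightarrow> 'm \<Rightarrow> 'm" where
  "mplus C f g = (let X = Src C f; Y = Tgt C f;
       b = (SOME b. is_biproduct C X X b); c = (SOME c. is_biproduct C Y Y c)
     in Cmp C (codiag C Y c) (Cmp C (dsum C b c f g) (diag C X b)))"

definition is_pre_hilbert_star_category :: "('o, 'm) starcat \<Rightarrow> bool" where
  "is_pre_hilbert_star_category C \<longleftrightarrow> is_star_category C
   \<and> (\<exists>Z. is_zero_obj C Z)
   \<and> (\<forall>X1 \<in> Ob C. \<forall>X2 \<in> Ob C. \<exists>b. is_orthonormal_biproduct C X1 X2 b)
   \<and> (\<forall>f \<in> Ar C. \<exists>e. is_kernel C f e \<and> is_isometry C e)
   \<and> (\<forall>X \<in> Ob C. \<exists>b. is_orthonormal_biproduct C X X b \<and> is_normal_mono C (diag C X b))"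

text \<open>Has finite biproducts: a zero object (empty biproduct) and all binary biproducts.\<close>
definition has_finite_biproducts :: "('o, 'm) starcat \<Rightarrow> bool" where
  "has_finite_biproducts C \<longleftrightarrow> (\<exists>Z. is_zero_obj C Z)
   \<and> (\<forall>X1 \<in> Ob C. \<forall>X2 \<in> Ob C. \<exists>b. is_biproduct C X1 X2 b)"

definition hom_monoid :: "('o, 'm) starcat \<Rightarrow> 'o \<Rightarrow> 'o \<Rightarrow> 'm monoid" where
  "hom_monoid C X Y = \<lparr>carrier = hom C X Y, mult = mplus C, one = zero_mor C X Y\<rparr>"

definition is_additive :: "('o, 'm) starcat \<Rightarrow> bool" where
  "is_additive C \<longleftrightarrow> has_finite_biproducts C
   \<and> (\<forall>X \<in> Ob C. \<forall>Y \<in> Ob C. comm_group (hom_monoid C X Y))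
   \<and> (\<forall>X \<in> Ob C. \<forall>Y \<in> Ob C. \<forall>W \<in> Ob C. \<forall>f \<in> hom C X Y. \<forall>g \<in> hom C X Y.
        (\<forall>h \<in> hom C Y W. Cmp C h (mplus C f g) = mplus C (Cmp C h f) (Cmp C h g))
      \<and> (\<forall>k \<in> hom C W X. Cmp C (mplus C f g) k = mplus C (Cmp C f k) (Cmp C g k)))"

end

theory Submission
  imports Defs
begin

(* Finite biproducts make every hom-set a commutative monoid under f + g = \<nabla> (f \<oplus> g) \<Delta>,
  with bilinear composition, and this sum can be computed through any biproduct:
  [a, a'] \<langle>x, y\<rangle> = a x + a' y. So it suffices to find a negative of each identity 1_X.
  Take an orthonormal biproduct X \<oplus> X whose diagonal \<Delta> is a kernel, so that the codiagonal is
  \<Delta>\<dagger>, and an isometric kernel m = \<langle>m1, m2\<rangle> of \<Delta>\<dagger>. Then m1 + m2 = \<Delta>\<dagger> m = 0,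
  m1\<dagger> + m2\<dagger> = m\<dagger> \<Delta> = 0 and m1\<dagger> m1 + m2\<dagger> m2 = m\<dagger> m = 1, and m1\<dagger> is monic because \<Delta> is a kernel.
  These identities force m1\<dagger> m1 + m1\<dagger> m1 = 1, so m1 + m1 is a left inverse of m1\<dagger>, and
  (m1 + m1) m2\<dagger> is the required negative of 1_X. *)

locale cat_with_zero =
  fixes C :: "('o, 'm) starcat"
  assumes category: "is_category C"
    and zero_obj_ex: "\<exists>Z. is_zero_obj C Z"
begin

abbreviation cmp (infixr "\<cdot>" 70) where "g \<cdot> f \<equiv> Cmp C g f"
abbreviation Hom where "Hom \<equiv> Defs.hom C"
abbreviation idm where "idm \<equiv> Idm C"
abbreviation zero where "zero \<equiv> zero_mor C"

lemma homD:
  assumes "f \<in> Hom X Y" shows "f \<in> Ar C" "Src C f = X" "Tgt C f = Y"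
  using assms by (simp_all add: hom_def)

lemma in_homI: "f \<in> Ar C \<Longrightarrow> f \<in> Hom (Src C f) (Tgt C f)"
  by (simp add: hom_def)

lemma src_in_Ob [simp]: "f \<in> Ar C \<Longrightarrow> Src C f \<in> Ob C"
  and tgt_in_Ob [simp]: "f \<in> Ar C \<Longrightarrow> Tgt C f \<in> Ob C"
  using category by (auto simp: is_category_def)

lemma hom_Ob: assumes "f \<in> Hom X Y" shows "X \<in> Ob C" "Y \<in> Ob C"
  using assms src_in_Ob tgt_in_Ob by (auto simp: hom_def)

lemma comp_in_hom [intro]: "f \<in> Hom X Y \<Longrightarrow> g \<in> Hom Y Z \<Longrightarrow> g \<cdot> f \<in> Hom X Z"
  using category by (auto simp: is_category_def hom_def)

lemma comp_Ar [simp]: "f \<in> Ar C \<Longrightarrow> g \<in> Ar C \<Longrightarrow> Tgt C f = Src C g \<Longrightarrow> g \<cdot> f \<in> Ar C"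
  and src_comp [simp]: "f \<in> Ar C \<Longrightarrow> g \<in> Ar C \<Longrightarrow> Tgt C f = Src C g \<Longrightarrow> Src C (g \<cdot> f) = Src C f"
  and tgt_comp [simp]: "f \<in> Ar C \<Longrightarrow> g \<in> Ar C \<Longrightarrow> Tgt C f = Src C g \<Longrightarrow> Tgt C (g \<cdot> f) = Tgt C g"
  using category by (auto simp: is_category_def hom_def)

lemma comp_assoc:
  "f \<in> Ar C \<Longrightarrow> g \<in> Ar C \<Longrightarrow> h \<in> Ar C \<Longrightarrow> Tgt C f = Src C g \<Longrightarrow> Tgt C g = Src C h
   \<Longrightarrow> (h \<cdot> g) \<cdot> f = h \<cdot> (g \<cdot> f)"
  using category unfolding is_category_def by metis

lemma idm_in_hom [intro]: "X \<in> Ob C \<Longrightarrow> idm X \<in> Hom X X"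
  using category by (simp add: is_category_def)

lemma idm_Ar [simp]:
  assumes "X \<in> Ob C" shows "idm X \<in> Ar C" "Src C (idm X) = X" "Tgt C (idm X) = X"
  using homD[OF idm_in_hom[OF assms]] by simp_all

lemma comp_idm_left [simp]: "f \<in> Ar C \<Longrightarrow> Tgt C f = Y \<Longrightarrow> idm Y \<cdot> f = f"
  and comp_idm_right [simp]: "f \<in> Ar C \<Longrightarrow> Src C f = X \<Longrightarrow> f \<cdot> idm X = f"
  using category by (auto simp: is_category_def)

lemma zero_obj_Ob: "is_zero_obj C Z \<Longrightarrow> Z \<in> Ob C"
  by (simp add: is_zero_obj_def)

lemma zero_obj_hom_ex1:
  assumes "is_zero_obj C Z" and "X \<in> Ob C"
  shows "\<exists>!a. a \<in> Hom X Z" and "\<exists>!b. b \<in> Hom Z X"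
  using assms unfolding is_zero_obj_def by simp_all

lemma zero_obj_hom_unique:
  assumes "is_zero_obj C Z"
  shows "a \<in> Hom X Z \<Longrightarrow> a' \<in> Hom X Z \<Longrightarrow> a = a'"
    and "b \<in> Hom Z Y \<Longrightarrow> b' \<in> Hom Z Y \<Longrightarrow> b = b'"
  using zero_obj_hom_ex1[OF assms] hom_Ob by (metis (no_types))+

lemma zero_obj_hom_ex:
  assumes "is_zero_obj C Z" and "X \<in> Ob C"
  obtains a b where "a \<in> Hom X Z" "b \<in> Hom Z X"
  using zero_obj_hom_ex1[OF assms] by (meson ex1_implies_ex)

text \<open>The zero object chosen in \<^const>\<open>zero_mor\<close> is immaterial: there is an arrow between
  any two zero objects, and arrows into or out of a zero object are unique.\<close>
lemma zero_mor_eq: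
  assumes Z: "is_zero_obj C Z" and a: "a \<in> Hom X Z" and b: "b \<in> Hom Z Y"
  shows "zero X Y = b \<cdot> a"
proof -
  have X: "X \<in> Ob C" and Y: "Y \<in> Ob C" using hom_Ob a b by auto
  let ?P = "\<lambda>w. \<exists>Z'. is_zero_obj C Z' \<and> w = (THE b. b \<in> Hom Z' Y) \<cdot> (THE a. a \<in> Hom X Z')"
  have "?P (zero X Y)"
    unfolding zero_mor_def by (rule someI_ex) (use Z in blast)
  then obtain Z' where Z': "is_zero_obj C Z'"
    and w: "zero X Y = (THE b. b \<in> Hom Z' Y) \<cdot> (THE a. a \<in> Hom X Z')"
    by blast
  obtain a' b' where a': "a' \<in> Hom X Z'" and b': "b' \<in> Hom Z' Y"
    using zero_obj_hom_ex[OF Z' X] zero_obj_hom_ex[OF Z' Y] by metis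
  have "(THE a. a \<in> Hom X Z') = a'" and "(THE b. b \<in> Hom Z' Y) = b'"
    using a' b' zero_obj_hom_unique[OF Z'] by blast+
  moreover obtain t where t: "t \<in> Hom Z' Z"
    using zero_obj_hom_ex[OF Z zero_obj_Ob[OF Z']] by metis
  have "a = t \<cdot> a'" and "b' = b \<cdot> t"
    using zero_obj_hom_unique[OF Z] zero_obj_hom_unique[OF Z'] a a' b b' t comp_in_hom by metis+
  ultimately show ?thesis
    using w homD[OF a'] homD[OF t] homD[OF b] by (simp add: comp_assoc)
qed

lemma zero_mor_in_hom [intro]:
  assumes X: "X \<in> Ob C" and Y: "Y \<in> Ob C" shows "zero X Y \<in> Hom X Y"
proof -
  obtain Z where Z: "is_zero_obj C Z" using zero_obj_ex by blast
  obtain a b where "a \<in> Hom X Z" "b \<in> Hom Z Y"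
    using zero_obj_hom_ex[OF Z X] zero_obj_hom_ex[OF Z Y] by metis
  then show ?thesis using zero_mor_eq[OF Z] by auto
qed

lemma zero_mor_Ar [simp]:
  assumes "X \<in> Ob C" "Y \<in> Ob C"
  shows "zero X Y \<in> Ar C" "Src C (zero X Y) = X" "Tgt C (zero X Y) = Y"
  using homD[OF zero_mor_in_hom[OF assms]] by simp_all

lemma comp_zero_mor_left [simp]:
  assumes f: "f \<in> Ar C" and "Tgt C f = Y" and W: "W \<in> Ob C"
  shows "zero Y W \<cdot> f = zero (Src C f) W"
proof -
  obtain Z where Z: "is_zero_obj C Z" using zero_obj_ex by blast
  obtain a b where a: "a \<in> Hom Y Z" and b: "b \<in> Hom Z W"
    using zero_obj_hom_ex[OF Z] zero_obj_hom_ex[OF Z W] assms by (metis tgt_in_Ob)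
  have "a \<cdot> f \<in> Hom (Src C f) Z" using a assms in_homI by blast
  then show ?thesis
    using zero_mor_eq[OF Z a b] zero_mor_eq[OF Z _ b] homD[OF a] homD[OF b] assms
    by (simp add: comp_assoc)
qed

lemma comp_zero_mor_right [simp]:
  assumes f: "f \<in> Ar C" and "Src C f = X" and W: "W \<in> Ob C"
  shows "f \<cdot> zero W X = zero W (Tgt C f)"
proof -
  obtain Z where Z: "is_zero_obj C Z" using zero_obj_ex by blast
  obtain a b where a: "a \<in> Hom W Z" and b: "b \<in> Hom Z X"
    using zero_obj_hom_ex[OF Z W] zero_obj_hom_ex[OF Z] assms by (metis src_in_Ob)
  have "f \<cdot> b \<in> Hom Z (Tgt C f)" using b assms in_homI by blast
  then show ?thesis
    using zero_mor_eq[OF Z a b] zero_mor_eq[OF Z a] homD[OF a] homD[OF b] assms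
    by (simp add: comp_assoc)
qed

lemma kernelD:
  assumes ker: "is_kernel C f e" and f: "f \<in> Hom A Q"
  shows "e \<in> Hom (Src C e) A" and "f \<cdot> e = zero (Src C e) Q"
    and "h \<in> Hom W A \<Longrightarrow> f \<cdot> h = zero W Q \<Longrightarrow> \<exists>v \<in> Hom W (Src C e). e \<cdot> v = h"
proof -
  note [simp] = homD[OF f]
  have Q: "Q \<in> Ob C" using hom_Ob(2)[OF f] .
  have e: "e \<in> Ar C" "Tgt C e = A" "f \<cdot> e = zero A Q \<cdot> e"
    and univ: "\<And>h. h \<in> Ar C \<Longrightarrow> Tgt C h = A \<Longrightarrow> f \<cdot> h = zero A Q \<cdot> h \<Longrightarrow>
        \<exists>!u. u \<in> Hom (Src C h) (Src C e) \<and> e \<cdot> u = h"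
    using ker unfolding is_kernel_def is_equaliser_def by auto
  show "e \<in> Hom (Src C e) A" using e by (simp add: hom_def)
  show "f \<cdot> e = zero (Src C e) Q" using e Q by simp
  assume h: "h \<in> Hom W A" and fh: "f \<cdot> h = zero W Q"
  then show "\<exists>v \<in> Hom W (Src C e). e \<cdot> v = h"
    using univ[of h] homD[OF h] Q by auto
qed

definition pairing :: "'o \<times> 'm \<times> 'm \<times> 'm \<times> 'm \<Rightarrow> 'm \<Rightarrow> 'm \<Rightarrow> 'm" where
  "pairing b f g =
     (case b of (B, s1, r1, s2, r2) \<Rightarrow> THE u. u \<in> Hom (Src C f) B \<and> r1 \<cdot> u = f \<and> r2 \<cdot> u = g)"

definition copairing :: "'o \<times> 'm \<times> 'm \<times> 'm \<times> 'm \<Rightarrow> 'm \<Rightarrow> 'm \<Rightarrow> 'm" where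
  "copairing b f g =
     (case b of (B, s1, r1, s2, r2) \<Rightarrow> THE u. u \<in> Hom B (Tgt C f) \<and> u \<cdot> s1 = f \<and> u \<cdot> s2 = g)"

lemma diag_eq_pairing: "X \<in> Ob C \<Longrightarrow> diag C X b = pairing b (idm X) (idm X)"
  by (simp add: diag_def pairing_def split: prod.split)

lemma codiag_eq_copairing: "X \<in> Ob C \<Longrightarrow> codiag C X b = copairing b (idm X) (idm X)"
  by (simp add: codiag_def copairing_def split: prod.split)

context
  fixes X1 X2 B s1 r1 s2 r2
  assumes biproduct: "is_biproduct C X1 X2 (B, s1, r1, s2, r2)"
begin

lemma biproduct_in_hom:
  "s1 \<in> Hom X1 B" "s2 \<in> Hom X2 B" "r1 \<in> Hom B X1" "r2 \<in> Hom B X2"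
  using biproduct unfolding is_biproduct_def by simp_all

lemma biproduct_Ar [simp]:
  "s1 \<in> Ar C" "s2 \<in> Ar C" "r1 \<in> Ar C" "r2 \<in> Ar C"
  "Src C s1 = X1" "Src C s2 = X2" "Src C r1 = B" "Src C r2 = B"
  "Tgt C s1 = B" "Tgt C s2 = B" "Tgt C r1 = X1" "Tgt C r2 = X2"
  "B \<in> Ob C" "X1 \<in> Ob C" "X2 \<in> Ob C"
  using biproduct_in_hom homD[OF biproduct_in_hom(1)] homD[OF biproduct_in_hom(2)]
    homD[OF biproduct_in_hom(3)] homD[OF biproduct_in_hom(4)]
    hom_Ob[OF biproduct_in_hom(1)] hom_Ob[OF biproduct_in_hom(2)]
  by simp_all

lemma biproduct_eqs [simp]:
  "r1 \<cdot> s1 = idm X1" "r2 \<cdot> s2 = idm X2" "r1 \<cdot> s2 = zero X2 X1" "r2 \<cdot> s1 = zero X1 X2"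
  using biproduct unfolding is_biproduct_def by simp_all

lemma pairing_ex1:
  assumes "f \<in> Hom W X1" "g \<in> Hom W X2"
  shows "\<exists>!u. u \<in> Hom W B \<and> r1 \<cdot> u = f \<and> r2 \<cdot> u = g"
  using biproduct hom_Ob(1)[OF assms(1)] assms unfolding is_biproduct_def by simp

lemma copairing_ex1:
  assumes "f \<in> Hom X1 W" "g \<in> Hom X2 W"
  shows "\<exists>!u. u \<in> Hom B W \<and> u \<cdot> s1 = f \<and> u \<cdot> s2 = g"
  using biproduct hom_Ob(2)[OF assms(1)] assms unfolding is_biproduct_def by simp

lemma pairing:
  assumes "f \<in> Hom W X1" "g \<in> Hom W X2"
  shows "pairing (B, s1, r1, s2, r2) f g \<in> Hom W B"
    and "r1 \<cdot> pairing (B, s1, r1, s2, r2) f g = f"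
    and "r2 \<cdot> pairing (B, s1, r1, s2, r2) f g = g"
  using theI'[OF pairing_ex1[OF assms]] homD[OF assms(1)] by (simp_all add: pairing_def)

lemma copairing:
  assumes "f \<in> Hom X1 W" "g \<in> Hom X2 W"
  shows "copairing (B, s1, r1, s2, r2) f g \<in> Hom B W"
    and "copairing (B, s1, r1, s2, r2) f g \<cdot> s1 = f"
    and "copairing (B, s1, r1, s2, r2) f g \<cdot> s2 = g"
  using theI'[OF copairing_ex1[OF assms]] homD[OF assms(1)] by (simp_all add: copairing_def)

lemma pairing_unique:
  assumes u: "u \<in> Hom W B" and "r1 \<cdot> u = f" and "r2 \<cdot> u = g"
  shows "u = pairing (B, s1, r1, s2, r2) f g"
proof -
  have "f \<in> Hom W X1" "g \<in> Hom W X2" using assms biproduct_in_hom by blast+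
  then show ?thesis using pairing_ex1 pairing assms by blast
qed

lemma copairing_unique:
  assumes u: "u \<in> Hom B W" and "u \<cdot> s1 = f" and "u \<cdot> s2 = g"
  shows "u = copairing (B, s1, r1, s2, r2) f g"
proof -
  have "f \<in> Hom X1 W" "g \<in> Hom X2 W" using assms biproduct_in_hom by blast+
  then show ?thesis using copairing_ex1 copairing assms by blast
qed

lemma biproduct_proj_eqI:
  "u \<in> Hom W B \<Longrightarrow> u' \<in> Hom W B \<Longrightarrow> r1 \<cdot> u = r1 \<cdot> u' \<Longrightarrow> r2 \<cdot> u = r2 \<cdot> u' \<Longrightarrow> u = u'"
  using pairing_unique by metis

lemma pairing_comp:
  assumes f: "f \<in> Hom W X1" and g: "g \<in> Hom W X2" and k: "k \<in> Hom V W"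
  shows "pairing (B, s1, r1, s2, r2) f g \<cdot> k = pairing (B, s1, r1, s2, r2) (f \<cdot> k) (g \<cdot> k)"
proof (rule pairing_unique)
  note p = pairing[OF f g]
  show "pairing (B, s1, r1, s2, r2) f g \<cdot> k \<in> Hom V B" using p(1) k by blast
  show "r1 \<cdot> (pairing (B, s1, r1, s2, r2) f g \<cdot> k) = f \<cdot> k"
    and "r2 \<cdot> (pairing (B, s1, r1, s2, r2) f g \<cdot> k) = g \<cdot> k"
    using p homD[OF p(1)] homD[OF k] by (simp_all flip: comp_assoc)
qed

lemma comp_copairing:
  assumes f: "f \<in> Hom X1 W" and g: "g \<in> Hom X2 W" and h: "h \<in> Hom W V"
  shows "h \<cdot> copairing (B, s1, r1, s2, r2) f g = copairing (B, s1, r1, s2, r2) (h \<cdot> f) (h \<cdot> g)"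
proof (rule copairing_unique)
  note c = copairing[OF f g]
  show "h \<cdot> copairing (B, s1, r1, s2, r2) f g \<in> Hom B V" using c(1) h by blast
  show "(h \<cdot> copairing (B, s1, r1, s2, r2) f g) \<cdot> s1 = h \<cdot> f"
    and "(h \<cdot> copairing (B, s1, r1, s2, r2) f g) \<cdot> s2 = h \<cdot> g"
    using c homD[OF c(1)] homD[OF h] by (simp_all add: comp_assoc)
qed

lemma biproduct_swap: "is_biproduct C X2 X1 (B, s2, r2, s1, r1)"
proof -
  have "\<exists>!u. u \<in> Hom B W \<and> u \<cdot> s2 = a2 \<and> u \<cdot> s1 = a1"
    if "a1 \<in> Hom X1 W" "a2 \<in> Hom X2 W" for W a1 a2
    using copairing_ex1[OF that] by blast
  moreover have "\<exists>!u. u \<in> Hom W B \<and> r2 \<cdot> u = a2 \<and> r1 \<cdot> u = a1"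
    if "a1 \<in> Hom W X1" "a2 \<in> Hom W X2" for W a1 a2
    using pairing_ex1[OF that] by blast
  ultimately show ?thesis
    unfolding is_biproduct_def prod.case using biproduct_in_hom by simp
qed

end

lemma pairing_comp_coprojections:
  assumes b: "is_biproduct C X1 X2 (B, s1, r1, s2, r2)"
    and d: "is_biproduct C W1 W2 (D, t1, q1, t2, q2)"
    and x: "x \<in> Hom W1 X1" and y: "y \<in> Hom W2 X2"
  shows "pairing (B, s1, r1, s2, r2) (x \<cdot> q1) (y \<cdot> q2) \<cdot> t1 = s1 \<cdot> x"
    and "pairing (B, s1, r1, s2, r2) (x \<cdot> q1) (y \<cdot> q2) \<cdot> t2 = s2 \<cdot> y"
proof -
  note [simp] = biproduct_Ar[OF b] biproduct_Ar[OF d] homD[OF x] homD[OF y]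
  define u where "u = pairing (B, s1, r1, s2, r2) (x \<cdot> q1) (y \<cdot> q2)"
  have u: "u \<in> Hom D B" "r1 \<cdot> u = x \<cdot> q1" "r2 \<cdot> u = y \<cdot> q2"
    unfolding u_def using biproduct_in_hom[OF d] x y by (intro pairing[OF b]; blast)+
  note [simp] = homD[OF u(1)]
  have "r1 \<cdot> (u \<cdot> t1) = x \<cdot> (q1 \<cdot> t1)" "r2 \<cdot> (u \<cdot> t1) = y \<cdot> (q2 \<cdot> t1)"
    "r1 \<cdot> (u \<cdot> t2) = x \<cdot> (q1 \<cdot> t2)" "r2 \<cdot> (u \<cdot> t2) = y \<cdot> (q2 \<cdot> t2)"
    using u by (simp_all flip: comp_assoc)
  moreover have "r1 \<cdot> (s1 \<cdot> x) = x" "r2 \<cdot> (s1 \<cdot> x) = zero W1 X2"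
    "r1 \<cdot> (s2 \<cdot> y) = zero W2 X1" "r2 \<cdot> (s2 \<cdot> y) = y"
    using comp_assoc[of x s1 r1] comp_assoc[of x s1 r2] comp_assoc[of y s2 r1] comp_assoc[of y s2 r2]
    by (simp_all add: biproduct_eqs[OF b])
  moreover have "u \<cdot> t1 \<in> Hom W1 B" "u \<cdot> t2 \<in> Hom W2 B" "s1 \<cdot> x \<in> Hom W1 B" "s2 \<cdot> y \<in> Hom W2 B"
    using u(1) x y biproduct_in_hom[OF b] biproduct_in_hom[OF d] by blast+
  ultimately show "u \<cdot> t1 = s1 \<cdot> x" "u \<cdot> t2 = s2 \<cdot> y"
    by (simp_all add: biproduct_eqs[OF d] biproduct_proj_eqI[OF b])
qed

text \<open>Both sides factor through x \<oplus> y = \<langle>x q1, y q2\<rangle> : W \<oplus> W \<rightarrow> X1 \<oplus> X2, since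
  (x \<oplus> y) \<Delta> = \<langle>x, y\<rangle> and [a, a'] (x \<oplus> y) = [a x, a' y].\<close>
lemma copairing_comp_pairing_diag:
  assumes b: "is_biproduct C X1 X2 (B, s1, r1, s2, r2)"
    and d: "is_biproduct C W W (D, t1, q1, t2, q2)"
    and a: "a \<in> Hom X1 V" and a': "a' \<in> Hom X2 V" and x: "x \<in> Hom W X1" and y: "y \<in> Hom W X2"
  shows "copairing (B, s1, r1, s2, r2) a a' \<cdot> pairing (B, s1, r1, s2, r2) x y
       = copairing (D, t1, q1, t2, q2) (a \<cdot> x) (a' \<cdot> y) \<cdot> pairing (D, t1, q1, t2, q2) (idm W) (idm W)"
proof -
  let ?b = "(B, s1, r1, s2, r2)" and ?d = "(D, t1, q1, t2, q2)"
  note [simp] = biproduct_Ar[OF b] biproduct_Ar[OF d] homD[OF x] homD[OF y] homD[OF a] homD[OF a']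
  have W: "W \<in> Ob C" using hom_Ob[OF x] by simp
  note diag = pairing[OF d idm_in_hom[OF W] idm_in_hom[OF W]]
  note xy_t = pairing_comp_coprojections[OF b d x y]
  define xy where "xy = pairing ?b (x \<cdot> q1) (y \<cdot> q2)"
  have xy: "xy \<in> Hom D B" "r1 \<cdot> xy = x \<cdot> q1" "r2 \<cdot> xy = y \<cdot> q2"
    unfolding xy_def using biproduct_in_hom[OF d] x y by (intro pairing[OF b]; blast)+
  note cp = copairing[OF b a a']
  note [simp] = homD[OF xy(1)] homD[OF diag(1)] homD[OF cp(1)]
  let ?\<Delta> = "pairing ?d (idm W) (idm W)" and ?cp = "copairing ?b a a'"
  have "r1 \<cdot> (xy \<cdot> ?\<Delta>) = x \<cdot> (q1 \<cdot> ?\<Delta>)" "r2 \<cdot> (xy \<cdot> ?\<Delta>) = y \<cdot> (q2 \<cdot> ?\<Delta>)"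
    using xy by (simp_all flip: comp_assoc)
  then have "xy \<cdot> ?\<Delta> = pairing ?b x y"
    using xy(1) diag by (intro pairing_unique[OF b]) auto
  moreover have "(?cp \<cdot> xy) \<cdot> t1 = (?cp \<cdot> s1) \<cdot> x" "(?cp \<cdot> xy) \<cdot> t2 = (?cp \<cdot> s2) \<cdot> y"
    using xy_t[folded xy_def] by (simp_all add: comp_assoc)
  then have "?cp \<cdot> xy = copairing ?d (a \<cdot> x) (a' \<cdot> y)"
    using cp xy(1) by (intro copairing_unique[OF d]) auto
  ultimately show ?thesis using comp_assoc[of ?\<Delta> xy ?cp] by simp
qed

end

locale cat_with_biproducts = cat_with_zero +
  assumes biproduct_ex: "X \<in> Ob C \<Longrightarrow> Y \<in> Ob C \<Longrightarrow> \<exists>b. is_biproduct C X Y b"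
begin

abbreviation madd (infixl "\<boxplus>" 65) where "f \<boxplus> g \<equiv> mplus C f g"

lemma some_biproduct:
  "X \<in> Ob C \<Longrightarrow> Y \<in> Ob C \<Longrightarrow> is_biproduct C X Y (SOME b. is_biproduct C X Y b)"
  using biproduct_ex by (rule someI_ex)

lemma obtain_biproduct:
  assumes "X \<in> Ob C" "Y \<in> Ob C"
  obtains B s1 r1 s2 r2 where "is_biproduct C X Y (B, s1, r1, s2, r2)"
  using biproduct_ex[OF assms] by (metis prod_cases5)

lemma mplus_eq_copairing_diag:
  assumes b: "is_biproduct C X X (B, s1, r1, s2, r2)" and f: "f \<in> Hom X Y" and g: "g \<in> Hom X Y"
  shows "f \<boxplus> g = copairing (B, s1, r1, s2, r2) f g \<cdot> pairing (B, s1, r1, s2, r2) (idm X) (idm X)"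
proof -
  have X: "X \<in> Ob C" and Y: "Y \<in> Ob C" using hom_Ob[OF f] by simp_all
  obtain B' s1' r1' s2' r2' where b'_eq: "(SOME b. is_biproduct C X X b) = (B', s1', r1', s2', r2')"
    by (rule prod_cases5)
  obtain D t1 q1 t2 q2 where d_eq: "(SOME d. is_biproduct C Y Y d) = (D, t1, q1, t2, q2)"
    by (rule prod_cases5)
  let ?b' = "(B', s1', r1', s2', r2')" and ?d = "(D, t1, q1, t2, q2)"
  have b': "is_biproduct C X X ?b'" and d: "is_biproduct C Y Y ?d"
    using some_biproduct[OF X X] some_biproduct[OF Y Y] b'_eq d_eq by simp_all
  note [simp] = biproduct_Ar[OF b'] homD[OF f] homD[OF g]
  note diag = pairing[OF b' idm_in_hom[OF X] idm_in_hom[OF X]]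
  have "dsum C ?b' ?d f g \<cdot> diag C X ?b' = pairing ?d (f \<cdot> r1') (g \<cdot> r2') \<cdot> pairing ?b' (idm X) (idm X)"
    by (simp add: dsum_def pairing_def diag_eq_pairing[OF X])
  also have "\<dots> = pairing ?d f g"
    using diag homD[OF diag(1)] f g biproduct_in_hom[OF b']
    by (subst pairing_comp[OF d]) (auto simp: comp_assoc)
  finally have "f \<boxplus> g = copairing ?d (idm Y) (idm Y) \<cdot> pairing ?d f g"
    by (simp add: mplus_def Let_def b'_eq d_eq codiag_eq_copairing[OF Y])
  also have "\<dots> = copairing (B, s1, r1, s2, r2) f g \<cdot> pairing (B, s1, r1, s2, r2) (idm X) (idm X)"
    using copairing_comp_pairing_diag[OF d b idm_in_hom[OF Y] idm_in_hom[OF Y] f g] by simp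
  finally show ?thesis .
qed

lemma copairing_comp_pairing:
  assumes b: "is_biproduct C X1 X2 (B, s1, r1, s2, r2)"
    and a: "a \<in> Hom X1 V" and a': "a' \<in> Hom X2 V" and x: "x \<in> Hom W X1" and y: "y \<in> Hom W X2"
  shows "copairing (B, s1, r1, s2, r2) a a' \<cdot> pairing (B, s1, r1, s2, r2) x y = a \<cdot> x \<boxplus> a' \<cdot> y"
proof -
  have W: "W \<in> Ob C" using hom_Ob[OF x] by simp
  obtain D t1 q1 t2 q2 where d: "is_biproduct C W W (D, t1, q1, t2, q2)"
    using obtain_biproduct[OF W W] .
  show ?thesis
    using copairing_comp_pairing_diag[OF b d a a' x y]
      mplus_eq_copairing_diag[OF d comp_in_hom[OF x a] comp_in_hom[OF y a']] by simp
qed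

lemma mplus_eq_codiag_pairing:
  assumes b: "is_biproduct C Y Y (B, s1, r1, s2, r2)" and f: "f \<in> Hom X Y" and g: "g \<in> Hom X Y"
  shows "f \<boxplus> g = copairing (B, s1, r1, s2, r2) (idm Y) (idm Y) \<cdot> pairing (B, s1, r1, s2, r2) f g"
proof -
  have "idm Y \<in> Hom Y Y" using hom_Ob(2)[OF f] by blast
  then show ?thesis using copairing_comp_pairing[OF b _ _ f g] homD[OF f] homD[OF g] by simp
qed

lemma mplus_in_hom [intro]:
  assumes f: "f \<in> Hom X Y" and g: "g \<in> Hom X Y" shows "f \<boxplus> g \<in> Hom X Y"
proof -
  have Y: "Y \<in> Ob C" using hom_Ob(2)[OF f] .
  obtain B s1 r1 s2 r2 where b: "is_biproduct C Y Y (B, s1, r1, s2, r2)"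
    using obtain_biproduct[OF Y Y] .
  show ?thesis
    using mplus_eq_codiag_pairing[OF b f g] copairing(1)[OF b idm_in_hom[OF Y] idm_in_hom[OF Y]]
      pairing(1)[OF b f g] by auto
qed

lemma comp_mplus:
  assumes f: "f \<in> Hom X Y" and g: "g \<in> Hom X Y" and h: "h \<in> Hom Y V"
  shows "h \<cdot> (f \<boxplus> g) = h \<cdot> f \<boxplus> h \<cdot> g"
proof -
  have X: "X \<in> Ob C" using hom_Ob(1)[OF f] .
  obtain B s1 r1 s2 r2 where b: "is_biproduct C X X (B, s1, r1, s2, r2)"
    using obtain_biproduct[OF X X] .
  let ?b = "(B, s1, r1, s2, r2)"
  have "h \<cdot> (f \<boxplus> g) = (h \<cdot> copairing ?b f g) \<cdot> pairing ?b (idm X) (idm X)"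
    using mplus_eq_copairing_diag[OF b f g] homD[OF h] homD[OF copairing(1)[OF b f g]]
      homD[OF pairing(1)[OF b idm_in_hom[OF X] idm_in_hom[OF X]]]
    by (simp add: comp_assoc)
  also have "\<dots> = h \<cdot> f \<boxplus> h \<cdot> g"
    using comp_copairing[OF b f g h] mplus_eq_copairing_diag[OF b comp_in_hom[OF f h] comp_in_hom[OF g h]]
    by simp
  finally show ?thesis .
qed

lemma mplus_comp:
  assumes f: "f \<in> Hom X Y" and g: "g \<in> Hom X Y" and k: "k \<in> Hom V X"
  shows "(f \<boxplus> g) \<cdot> k = f \<cdot> k \<boxplus> g \<cdot> k"
proof -
  have Y: "Y \<in> Ob C" using hom_Ob(2)[OF f] .
  obtain B s1 r1 s2 r2 where b: "is_biproduct C Y Y (B, s1, r1, s2, r2)"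
    using obtain_biproduct[OF Y Y] .
  let ?b = "(B, s1, r1, s2, r2)"
  have "(f \<boxplus> g) \<cdot> k = copairing ?b (idm Y) (idm Y) \<cdot> (pairing ?b f g \<cdot> k)"
    using mplus_eq_codiag_pairing[OF b f g] homD[OF k] homD[OF pairing(1)[OF b f g]]
      homD[OF copairing(1)[OF b idm_in_hom[OF Y] idm_in_hom[OF Y]]]
    by (simp add: comp_assoc)
  also have "\<dots> = f \<cdot> k \<boxplus> g \<cdot> k"
    using pairing_comp[OF b f g k] mplus_eq_codiag_pairing[OF b comp_in_hom[OF k f] comp_in_hom[OF k g]]
    by simp
  finally show ?thesis .
qed

lemma mplus_zero_right:
  assumes f: "f \<in> Hom X Y" shows "f \<boxplus> zero X Y = f"
proof -
  have X: "X \<in> Ob C" and Y: "Y \<in> Ob C" using hom_Ob[OF f] by simp_all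
  obtain B s1 r1 s2 r2 where b: "is_biproduct C X X (B, s1, r1, s2, r2)"
    using obtain_biproduct[OF X X] .
  let ?b = "(B, s1, r1, s2, r2)"
  note [simp] = biproduct_Ar[OF b] biproduct_eqs[OF b] homD[OF f]
  note diag = pairing[OF b idm_in_hom[OF X] idm_in_hom[OF X]]
  have "f \<cdot> r1 = copairing ?b f (zero X Y)"
    using f biproduct_in_hom[OF b] by (intro copairing_unique[OF b]) (auto simp: comp_assoc Y)
  then have "f \<boxplus> zero X Y = (f \<cdot> r1) \<cdot> pairing ?b (idm X) (idm X)"
    using mplus_eq_copairing_diag[OF b f zero_mor_in_hom[OF X Y]] by simp
  also have "\<dots> = f" using diag homD[OF diag(1)] by (simp add: comp_assoc)
  finally show ?thesis .
qed

lemma mplus_commute: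
  assumes f: "f \<in> Hom X Y" and g: "g \<in> Hom X Y" shows "f \<boxplus> g = g \<boxplus> f"
proof -
  have X: "X \<in> Ob C" using hom_Ob(1)[OF f] .
  obtain B s1 r1 s2 r2 where b: "is_biproduct C X X (B, s1, r1, s2, r2)"
    using obtain_biproduct[OF X X] .
  note b' = biproduct_swap[OF b]
  have "copairing (B, s1, r1, s2, r2) f g = copairing (B, s2, r2, s1, r1) g f"
    using copairing[OF b f g] by (intro copairing_unique[OF b']) auto
  moreover have "pairing (B, s1, r1, s2, r2) (idm X) (idm X) = pairing (B, s2, r2, s1, r1) (idm X) (idm X)"
    using pairing[OF b idm_in_hom[OF X] idm_in_hom[OF X]] by (intro pairing_unique[OF b']) auto
  ultimately show ?thesis
    using mplus_eq_copairing_diag[OF b f g] mplus_eq_copairing_diag[OF b' g f] by simp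
qed

lemma mplus_zero_left: "f \<in> Hom X Y \<Longrightarrow> zero X Y \<boxplus> f = f"
  using mplus_commute mplus_zero_right hom_Ob zero_mor_in_hom by metis

lemma mplus_right_commute:
  assumes f: "f \<in> Hom X Y" and g: "g \<in> Hom X Y" and h: "h \<in> Hom X Y"
  shows "(f \<boxplus> g) \<boxplus> h = (f \<boxplus> h) \<boxplus> g"
proof -
  have X: "X \<in> Ob C" and Y: "Y \<in> Ob C" using hom_Ob[OF f] by simp_all
  obtain B s1 r1 s2 r2 where b: "is_biproduct C X X (B, s1, r1, s2, r2)"
    using obtain_biproduct[OF X X] .
  let ?b = "(B, s1, r1, s2, r2)"
  note zero = zero_mor_in_hom[OF X Y]
  note s = biproduct_in_hom(1,2)[OF b]
  note diag = pairing(1)[OF b idm_in_hom[OF X] idm_in_hom[OF X]]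
  note c1 = copairing[OF b f h] and c2 = copairing[OF b g zero]
  have "copairing ?b (f \<boxplus> g) h = copairing ?b f h \<boxplus> copairing ?b g (zero X Y)"
    using mplus_comp[OF c1(1) c2(1) s(1)] mplus_comp[OF c1(1) c2(1) s(2)] c1 c2 mplus_zero_right[OF h]
    by (intro copairing_unique[OF b, symmetric]) auto
  then have "(f \<boxplus> g) \<boxplus> h = (copairing ?b f h \<boxplus> copairing ?b g (zero X Y)) \<cdot> pairing ?b (idm X) (idm X)"
    using mplus_eq_copairing_diag[OF b mplus_in_hom[OF f g] h] by simp
  also have "\<dots> = (f \<boxplus> h) \<boxplus> (g \<boxplus> zero X Y)"
    using mplus_comp[OF c1(1) c2(1) diag] mplus_eq_copairing_diag[OF b f h]
      mplus_eq_copairing_diag[OF b g zero] by simp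
  finally show ?thesis using mplus_zero_right[OF g] by simp
qed

lemma mplus_assoc:
  assumes f: "f \<in> Hom X Y" and g: "g \<in> Hom X Y" and h: "h \<in> Hom X Y"
  shows "(f \<boxplus> g) \<boxplus> h = f \<boxplus> (g \<boxplus> h)"
  using mplus_right_commute[OF g h f] mplus_commute[OF f mplus_in_hom[OF g h]] mplus_commute[OF g f]
  by simp

lemma hom_monoid_carrier: "carrier (hom_monoid C X Y) = Hom X Y"
  and hom_monoid_mult: "f \<otimes>\<^bsub>hom_monoid C X Y\<^esub> g = f \<boxplus> g"
  and hom_monoid_one: "\<one>\<^bsub>hom_monoid C X Y\<^esub> = zero X Y"
  by (simp_all add: hom_monoid_def)

lemma comm_group_hom_monoidI:
  assumes X: "X \<in> Ob C" and Y: "Y \<in> Ob C"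
    and neg_idm: "\<exists>n \<in> Hom X X. idm X \<boxplus> n = zero X X"
  shows "comm_group (hom_monoid C X Y)"
proof (rule comm_groupI, unfold hom_monoid_carrier hom_monoid_mult hom_monoid_one)
  fix f g h assume f: "f \<in> Hom X Y" and g: "g \<in> Hom X Y" and h: "h \<in> Hom X Y"
  show "f \<boxplus> g \<boxplus> h = f \<boxplus> (g \<boxplus> h)" using mplus_assoc[OF f g h] .
next
  fix f assume f: "f \<in> Hom X Y"
  obtain n where n: "n \<in> Hom X X" "idm X \<boxplus> n = zero X X" using neg_idm by blast
  note fn = comp_in_hom[OF n(1) f]
  have "f \<cdot> n \<boxplus> f = f \<cdot> (idm X \<boxplus> n)"
    using mplus_commute[OF fn f] comp_mplus[OF idm_in_hom[OF X] n(1) f] homD[OF f] by simp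
  also have "\<dots> = zero X Y" using n(2) homD[OF f] X by simp
  finally show "\<exists>g \<in> Hom X Y. g \<boxplus> f = zero X Y" using fn by blast
qed (use X Y mplus_commute mplus_zero_left in blast)+

text \<open>n1 m1 = n1 m1 + n1 m2 + n2 m2 = n2 m2, hence n1 m1 + n1 m1 = 1 and m1 + m1 is a left
  inverse of n1.\<close>
lemma neg_idm_exI:
  assumes m1: "m1 \<in> Hom M X" and m2: "m2 \<in> Hom M X" and n1: "n1 \<in> Hom X M" and n2: "n2 \<in> Hom X M"
    and m_sum: "m1 \<boxplus> m2 = zero M X" and n_sum: "n1 \<boxplus> n2 = zero X M"
    and unit: "n1 \<cdot> m1 \<boxplus> n2 \<cdot> m2 = idm M"
    and cancel: "\<And>x y. x \<in> Hom X X \<Longrightarrow> y \<in> Hom X X \<Longrightarrow> n1 \<cdot> x = n1 \<cdot> y \<Longrightarrow> x = y"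
  shows "\<exists>n \<in> Hom X X. idm X \<boxplus> n = zero X X"
proof -
  have M: "M \<in> Ob C" and X: "X \<in> Ob C" using hom_Ob[OF m1] by simp_all
  note [simp] = homD[OF m1] homD[OF m2] homD[OF n1] homD[OF n2]
  have n11: "n1 \<cdot> m1 \<in> Hom M M" and n12: "n1 \<cdot> m2 \<in> Hom M M" and n22: "n2 \<cdot> m2 \<in> Hom M M"
    using m1 m2 n1 n2 by blast+
  have "n1 \<cdot> m1 \<boxplus> n1 \<cdot> m2 = zero M M" using comp_mplus[OF m1 m2 n1] m_sum M by simp
  moreover have "n1 \<cdot> m2 \<boxplus> n2 \<cdot> m2 = zero M M" using mplus_comp[OF n1 n2 m2] n_sum M by simp
  ultimately have "n1 \<cdot> m1 = n2 \<cdot> m2"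
    using mplus_assoc[OF n11 n12 n22] mplus_zero_right[OF n11] mplus_zero_left[OF n22] by simp
  then have unit': "n1 \<cdot> m1 \<boxplus> n1 \<cdot> m1 = idm M" using unit by simp
  define l where "l = m1 \<boxplus> m1"
  have l: "l \<in> Hom M X" unfolding l_def using m1 by blast
  note [simp] = homD[OF l]
  have "n1 \<cdot> l = idm M" using comp_mplus[OF m1 m1 n1] unit' unfolding l_def by simp
  then have "n1 \<cdot> (l \<cdot> n1) = n1 \<cdot> idm X" by (simp flip: comp_assoc)
  then have inv: "l \<cdot> n1 = idm X"
    using cancel[OF comp_in_hom[OF n1 l] idm_in_hom[OF X]] by blast
  have "idm X \<boxplus> l \<cdot> n2 = l \<cdot> (n1 \<boxplus> n2)" using comp_mplus[OF n1 n2 l] inv by simp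
  also have "\<dots> = zero X X" using n_sum X by simp
  finally show ?thesis using l n2 by blast
qed

text \<open>Because the diagonal is the kernel of q and q factors through [k1, k2], any x, y with
  k1 x = k1 y satisfy [k1, k2] \<langle>x, y\<rangle> = k1 y + k2 y = 0, so \<langle>x, y\<rangle> factors through the diagonal.\<close>
lemma left_cancel_of_diag_kernel:
  assumes b: "is_biproduct C X X (B, s1, r1, s2, r2)"
    and ker: "is_kernel C q (pairing (B, s1, r1, s2, r2) (idm X) (idm X))" and q: "q \<in> Hom B Q"
    and k1: "k1 \<in> Hom X M" and k2: "k2 \<in> Hom X M" and k_sum: "k1 \<boxplus> k2 = zero X M"
    and w: "w \<in> Hom M Q" and factor: "q = w \<cdot> copairing (B, s1, r1, s2, r2) k1 k2"
    and x: "x \<in> Hom W X" and y: "y \<in> Hom W X" and eq: "k1 \<cdot> x = k1 \<cdot> y"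
  shows "x = y"
proof -
  let ?b = "(B, s1, r1, s2, r2)"
  let ?\<Delta> = "pairing ?b (idm X) (idm X)" and ?k = "copairing ?b k1 k2" and ?p = "pairing ?b x y"
  have W: "W \<in> Ob C" and X: "X \<in> Ob C" and M: "M \<in> Ob C"
    using hom_Ob[OF x] hom_Ob[OF k1] by simp_all
  note p = pairing[OF b x y] and k = copairing[OF b k1 k2]
  note [simp] = homD[OF p(1)] homD[OF k(1)] homD[OF w] biproduct_Ar[OF b]
  have "?k \<cdot> ?p = k1 \<cdot> y \<boxplus> k2 \<cdot> y" using copairing_comp_pairing[OF b k1 k2 x y] eq by simp
  also have "\<dots> = zero W M" using mplus_comp[OF k1 k2 y] k_sum homD[OF y] M by simp
  finally have "q \<cdot> ?p = zero W Q" using factor comp_assoc[of ?p ?k w] W by simp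
  then obtain v where v: "v \<in> Hom W X" "?\<Delta> \<cdot> v = ?p"
    using kernelD(3)[OF ker q p(1)] homD[OF pairing(1)[OF b idm_in_hom[OF X] idm_in_hom[OF X]]] by auto
  have "x = (r1 \<cdot> ?\<Delta>) \<cdot> v" and "y = (r2 \<cdot> ?\<Delta>) \<cdot> v"
    using v p homD[OF v(1)] homD[OF pairing(1)[OF b idm_in_hom[OF X] idm_in_hom[OF X]]]
    by (simp_all add: comp_assoc)
  then show ?thesis
    using pairing(2,3)[OF b idm_in_hom[OF X] idm_in_hom[OF X]] by simp
qed

end

locale pre_hilbert_star_cat =
  fixes C :: "('o, 'm) starcat"
  assumes pre_hilbert: "is_pre_hilbert_star_category C"

sublocale pre_hilbert_star_cat \<subseteq> cat_with_biproducts
  using pre_hilbert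
  unfolding is_pre_hilbert_star_category_def is_star_category_def is_orthonormal_biproduct_def
  by unfold_locales blast+

context pre_hilbert_star_cat
begin

abbreviation star ("_\<^sup>\<dagger>" [1000] 1000) where "f\<^sup>\<dagger> \<equiv> Str C f"

lemma star_category: "is_star_category C"
  using pre_hilbert by (simp add: is_pre_hilbert_star_category_def)

lemma isometric_kernel_ex: "f \<in> Ar C \<Longrightarrow> \<exists>e. is_kernel C f e \<and> is_isometry C e"
  using pre_hilbert by (simp add: is_pre_hilbert_star_category_def)

lemma normal_diag_ex:
  "X \<in> Ob C \<Longrightarrow> \<exists>b. is_orthonormal_biproduct C X X b \<and> is_normal_mono C (diag C X b)"
  using pre_hilbert by (simp add: is_pre_hilbert_star_category_def)

lemma star_in_hom [intro]: "f \<in> Hom X Y \<Longrightarrow> f\<^sup>\<dagger> \<in> Hom Y X"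
  using star_category by (auto simp: is_star_category_def hom_def)

lemma star_Ar [simp]:
  assumes "f \<in> Ar C" shows "f\<^sup>\<dagger> \<in> Ar C" "Src C (f\<^sup>\<dagger>) = Tgt C f" "Tgt C (f\<^sup>\<dagger>) = Src C f"
  using homD[OF star_in_hom[OF in_homI[OF assms]]] by simp_all

lemma star_star [simp]: "f \<in> Ar C \<Longrightarrow> f\<^sup>\<dagger>\<^sup>\<dagger> = f"
  using star_category by (simp add: is_star_category_def)

lemma star_comp [simp]: "f \<in> Ar C \<Longrightarrow> g \<in> Ar C \<Longrightarrow> Tgt C f = Src C g \<Longrightarrow> (g \<cdot> f)\<^sup>\<dagger> = f\<^sup>\<dagger> \<cdot> g\<^sup>\<dagger>"
  using star_category by (simp add: is_star_category_def)

lemma star_idm [simp]: "X \<in> Ob C \<Longrightarrow> (idm X)\<^sup>\<dagger> = idm X"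
  using star_category by (simp add: is_star_category_def)

lemma star_zero_mor [simp]:
  assumes X: "X \<in> Ob C" and Y: "Y \<in> Ob C" shows "(zero X Y)\<^sup>\<dagger> = zero Y X"
proof -
  obtain Z where Z: "is_zero_obj C Z" using zero_obj_ex by blast
  obtain a b where a: "a \<in> Hom X Z" and b: "b \<in> Hom Z Y"
    using zero_obj_hom_ex[OF Z X] zero_obj_hom_ex[OF Z Y] by metis
  show ?thesis
    using zero_mor_eq[OF Z a b] zero_mor_eq[OF Z star_in_hom[OF b] star_in_hom[OF a]]
      homD[OF a] homD[OF b] by simp
qed

lemma copairing_star:
  assumes b: "is_biproduct C X1 X2 (B, s1, s1\<^sup>\<dagger>, s2, s2\<^sup>\<dagger>)"
    and f: "f \<in> Hom W X1" and g: "g \<in> Hom W X2"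
  shows "copairing (B, s1, s1\<^sup>\<dagger>, s2, s2\<^sup>\<dagger>) (f\<^sup>\<dagger>) (g\<^sup>\<dagger>) = (pairing (B, s1, s1\<^sup>\<dagger>, s2, s2\<^sup>\<dagger>) f g)\<^sup>\<dagger>"
proof -
  note p = pairing[OF b f g]
  note [simp] = homD[OF p(1)] biproduct_Ar[OF b]
  have "(pairing (B, s1, s1\<^sup>\<dagger>, s2, s2\<^sup>\<dagger>) f g)\<^sup>\<dagger> \<cdot> s1 = f\<^sup>\<dagger>"
    and "(pairing (B, s1, s1\<^sup>\<dagger>, s2, s2\<^sup>\<dagger>) f g)\<^sup>\<dagger> \<cdot> s2 = g\<^sup>\<dagger>"
    using star_comp[of "pairing (B, s1, s1\<^sup>\<dagger>, s2, s2\<^sup>\<dagger>) f g" "s1\<^sup>\<dagger>"]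
      star_comp[of "pairing (B, s1, s1\<^sup>\<dagger>, s2, s2\<^sup>\<dagger>) f g" "s2\<^sup>\<dagger>"] p
    by (simp_all add: biproduct_Ar[OF b, simplified])
  then show ?thesis using star_in_hom[OF p(1)] by (intro copairing_unique[OF b, symmetric])
qed

lemma factor_through_star_of_kernel:
  assumes m: "is_kernel C (e\<^sup>\<dagger>) m" and e: "e \<in> Hom X B" and q: "q \<in> Hom B Q"
    and qe: "q \<cdot> e = zero X Q"
  shows "\<exists>w \<in> Hom (Src C m) Q. q = w \<cdot> m\<^sup>\<dagger>"
proof -
  have X: "X \<in> Ob C" and Q: "Q \<in> Ob C" using hom_Ob[OF e] hom_Ob[OF q] by simp_all
  note [simp] = homD[OF e] homD[OF q]
  have "e\<^sup>\<dagger> \<cdot> q\<^sup>\<dagger> = zero Q X"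
    using star_comp[of e q] qe X Q by simp
  then have "\<exists>u \<in> Hom Q (Src C m). m \<cdot> u = q\<^sup>\<dagger>"
    by (rule kernelD(3)[OF m star_in_hom[OF e] star_in_hom[OF q]])
  then obtain u where u: "u \<in> Hom Q (Src C m)" "m \<cdot> u = q\<^sup>\<dagger>" ..
  note [simp] = homD[OF u(1)] homD(1,3)[OF kernelD(1)[OF m star_in_hom[OF e]]]
  have "q = u\<^sup>\<dagger> \<cdot> m\<^sup>\<dagger>" using star_comp[of u m] u(2) by simp
  then show ?thesis using star_in_hom[OF u(1)] by blast
qed

lemma isometric_kernel_codiag:
  assumes b: "is_biproduct C X X (B, s1, s1\<^sup>\<dagger>, s2, s2\<^sup>\<dagger>)"
    and ker: "is_kernel C ((pairing (B, s1, s1\<^sup>\<dagger>, s2, s2\<^sup>\<dagger>) (idm X) (idm X))\<^sup>\<dagger>) m"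
    and iso: "is_isometry C m"
  defines "M \<equiv> Src C m" and "m1 \<equiv> s1\<^sup>\<dagger> \<cdot> m" and "m2 \<equiv> s2\<^sup>\<dagger> \<cdot> m"
  shows "m1 \<in> Hom M X" and "m2 \<in> Hom M X"
    and "m\<^sup>\<dagger> = copairing (B, s1, s1\<^sup>\<dagger>, s2, s2\<^sup>\<dagger>) (m1\<^sup>\<dagger>) (m2\<^sup>\<dagger>)"
    and "m1 \<boxplus> m2 = zero M X" and "m1\<^sup>\<dagger> \<boxplus> m2\<^sup>\<dagger> = zero X M" and "m1\<^sup>\<dagger> \<cdot> m1 \<boxplus> m2\<^sup>\<dagger> \<cdot> m2 = idm M"
proof -
  let ?b = "(B, s1, s1\<^sup>\<dagger>, s2, s2\<^sup>\<dagger>)"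
  have X: "X \<in> Ob C" using biproduct_Ar[OF b] by simp
  note \<Delta> = pairing[OF b idm_in_hom[OF X] idm_in_hom[OF X]]
  note [simp] = biproduct_Ar[OF b] homD[OF \<Delta>(1)]
  note ker_m = kernelD(1,2)[OF ker star_in_hom[OF \<Delta>(1)], folded M_def]
  have m: "m \<in> Hom M B" using ker_m(1) .
  have M: "M \<in> Ob C" using hom_Ob[OF m] by simp
  note [simp] = homD[OF m]
  show m1: "m1 \<in> Hom M X" and m2: "m2 \<in> Hom M X"
    unfolding m1_def m2_def using m biproduct_in_hom[OF b] by blast+
  have m_eq: "m = pairing ?b m1 m2"
    using m unfolding m1_def m2_def by (rule pairing_unique[OF b]) (rule refl)+
  show m_star_eq: "m\<^sup>\<dagger> = copairing ?b (m1\<^sup>\<dagger>) (m2\<^sup>\<dagger>)"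
    using copairing_star[OF b m1 m2] m_eq by simp
  have codiag: "copairing ?b (idm X) (idm X) = (pairing ?b (idm X) (idm X))\<^sup>\<dagger>"
    using copairing_star[OF b idm_in_hom[OF X] idm_in_hom[OF X]] X by simp
  show "m1 \<boxplus> m2 = zero M X"
    using copairing_comp_pairing[OF b idm_in_hom[OF X] idm_in_hom[OF X] m1 m2]
      codiag m_eq ker_m(2) homD[OF m1] homD[OF m2] by simp
  show "m1\<^sup>\<dagger> \<boxplus> m2\<^sup>\<dagger> = zero X M"
    using copairing_comp_pairing[OF b star_in_hom[OF m1] star_in_hom[OF m2] idm_in_hom[OF X] idm_in_hom[OF X]]
      m_star_eq star_comp[of m "(pairing ?b (idm X) (idm X))\<^sup>\<dagger>"] ker_m(2) homD[OF m1] homD[OF m2] X M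
    by simp
  show "m1\<^sup>\<dagger> \<cdot> m1 \<boxplus> m2\<^sup>\<dagger> \<cdot> m2 = idm M"
    using copairing_comp_pairing[OF b star_in_hom[OF m1] star_in_hom[OF m2] m1 m2]
      m_eq m_star_eq iso unfolding is_isometry_def M_def by simp
qed

lemma neg_idm_ex:
  assumes X: "X \<in> Ob C"
  shows "\<exists>n \<in> Hom X X. idm X \<boxplus> n = zero X X"
proof -
  obtain b where ob: "is_orthonormal_biproduct C X X b" and nm: "is_normal_mono C (diag C X b)"
    using normal_diag_ex[OF X] by blast
  obtain B s1 r1 s2 r2 where b_eq: "b = (B, s1, r1, s2, r2)" by (rule prod_cases5)
  let ?b = "(B, s1, s1\<^sup>\<dagger>, s2, s2\<^sup>\<dagger>)"
  have b: "is_biproduct C X X ?b" and r: "r1 = s1\<^sup>\<dagger>" "r2 = s2\<^sup>\<dagger>"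
    using ob unfolding is_orthonormal_biproduct_def b_eq by auto
  let ?\<Delta> = "pairing ?b (idm X) (idm X)"
  note \<Delta> = pairing(1)[OF b idm_in_hom[OF X] idm_in_hom[OF X]]
  obtain q where "q \<in> Ar C" "Src C q = B" and ker_q: "is_kernel C q ?\<Delta>"
    using nm homD[OF \<Delta>] unfolding is_normal_mono_def b_eq r diag_eq_pairing[OF X] by auto
  then have q: "q \<in> Hom B (Tgt C q)" by (simp add: hom_def)
  obtain m where ker_m: "is_kernel C (?\<Delta>\<^sup>\<dagger>) m" and iso: "is_isometry C m"
    using isometric_kernel_ex homD(1)[OF star_in_hom[OF \<Delta>]] by blast
  note m = isometric_kernel_codiag[OF b ker_m iso]
  obtain w where w: "w \<in> Hom (Src C m) (Tgt C q)"
    and factor: "q = w \<cdot> copairing ?b ((s1\<^sup>\<dagger> \<cdot> m)\<^sup>\<dagger>) ((s2\<^sup>\<dagger> \<cdot> m)\<^sup>\<dagger>)"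
    using factor_through_star_of_kernel[OF ker_m \<Delta> q] kernelD(2)[OF ker_q q] X m(3)
      homD[OF \<Delta>] by auto
  note cancel = left_cancel_of_diag_kernel[OF b ker_q q star_in_hom[OF m(1)] star_in_hom[OF m(2)] m(5) w factor]
  show ?thesis
    using neg_idm_exI[OF m(1,2) star_in_hom[OF m(1)] star_in_hom[OF m(2)] m(4-6) cancel] .
qed

end

theorem proposition3p2:
  fixes C :: "('o, 'm) starcat"
  assumes "is_pre_hilbert_star_category C"
  shows "is_additive C"
proof -
  interpret pre_hilbert_star_cat C by (rule pre_hilbert_star_cat.intro[OF assms])
  have "has_finite_biproducts C"
    unfolding has_finite_biproducts_def using zero_obj_ex biproduct_ex by blast
  moreover have "comm_group (hom_monoid C X Y)" if "X \<in> Ob C" "Y \<in> Ob C" for X Y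
    using comm_group_hom_monoidI[OF that neg_idm_ex[OF that(1)]] .
  moreover have "\<forall>X \<in> Ob C. \<forall>Y \<in> Ob C. \<forall>W \<in> Ob C. \<forall>f \<in> Hom X Y. \<forall>g \<in> Hom X Y.
      (\<forall>h \<in> Hom Y W. h \<cdot> (f \<boxplus> g) = h \<cdot> f \<boxplus> h \<cdot> g) \<and>
      (\<forall>k \<in> Hom W X. (f \<boxplus> g) \<cdot> k = f \<cdot> k \<boxplus> g \<cdot> k)"
    by (intro ballI conjI comp_mplus mplus_comp; assumption)
  ultimately show ?thesis
    unfolding is_additive_def by blast
qed

end
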